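(* Let $p$ be an odd prime, $v$ an integer with $1<v<p-1$ such that $g=v$ is a primitive root modulo $p$, and $t\ge1$. For $z\in\{0,\dots,v-1\}^t$ let $\lambda(z)=\#\{x\in\{0,\dots,p-2\}:\ (v^{x+\iota}\,\%\,p)\,\%\,v=z(\iota)\ \forall\,0\le\iota<t\}$. Then $\lambda(z)>0$ for all $z\in\{0,\dots,v-1\}^t$ if and only if $p\ge v^t+1$.
   Context: $x\,\%\,m$ denotes the least nonnegative remainder of the integer $x$ modulo $m$. *)

theory Defs
  imports "HOL-Number_Theory.Number_Theory"
begin

definition pattern_count :: "nat \<Rightarrow> nat \<Rightarrow> nat \<Rightarrow> (nat \<Rightarrow> nat) \<Rightarrow> nat" where
  "pattern_count v p t z =
     card {x \<in> {0..p-2}. \<forall>i<t. (v ^ (x + i) mod p) mod v = z i}"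

end

theory Submission
  imports Defs
begin

text \<open>Since v is a primitive root, the starting values v^x mod p for x = 0, ..., p - 2
  run through 1, ..., p - 1, so the question is which patterns ((v^i a mod p) mod v)_{i<t}
  occur for 0 < a < p. There are v^t patterns, whence p - 1 \<ge> v^t is necessary.
  Conversely, for i \<ge> 1 the entry (v^i a mod p) mod v is (- p d_i) mod v, where d_i is the
  i-th base-v digit of a/p, and multiplication by p permutes the residues mod v. Prescribing the
  last t - 1 entries thus means fixing the first t - 1 digits of a/p, i.e. confining a to an
  interval of length p/v^(t-1) > v; such an interval contains a full residue system mod v,
  which also lets us prescribe the first entry a mod v.\<close>

lemma exists_mod_eq_in_window:
  fixes c r v :: nat
  assumes "r < v"
  shows "\<exists>a. c \<le> a \<and> a < c + v \<and> a mod v = r"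
proof -
  define a where "a = c + (r + v - c mod v) mod v"
  have "a mod v = (c mod v + (r + v - c mod v)) mod v"
    unfolding a_def by (simp add: mod_add_right_eq mod_add_left_eq)
  also have "c mod v + (r + v - c mod v) = r + v"
    using mod_less_divisor[of v c] assms by linarith
  finally have "a mod v = r" using assms by simp
  moreover have "c \<le> a" "a < c + v" unfolding a_def using assms by auto
  ultimately show ?thesis by blast
qed

lemma coprime_exists_add_mult_cong_0:
  fixes p v r :: nat
  assumes "coprime p v" "0 < v"
  shows "\<exists>d<v. [r + p * d = 0] (mod v)"
proof -
  obtain q where q: "[p * q = 1] (mod v)"
    using cong_solve_coprime_nat[OF assms(1)] by auto
  define d where "d = (q * (v - r mod v)) mod v"
  have "[r + p * d = r mod v + p * q * (v - r mod v)] (mod v)"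
    unfolding d_def by (intro cong_add) (simp_all add: cong_def mod_mult_right_eq mult.assoc)
  also have "[r mod v + p * q * (v - r mod v) = r mod v + 1 * (v - r mod v)] (mod v)"
    by (intro cong_add cong_mult q cong_refl)
  also have "r mod v + 1 * (v - r mod v) = v" using assms(2) by simp
  finally have "[r + p * d = 0] (mod v)" by (simp add: cong_def)
  moreover have "d < v" using assms(2) unfolding d_def by simp
  ultimately show ?thesis by blast
qed

lemma leading_digits_prescribe_residue_pattern:
  fixes p v t :: nat and w :: "nat \<Rightarrow> nat"
  assumes "coprime p v" "0 < p" "0 < v" "\<forall>i<t. w i < v"
  shows "\<exists>D<v ^ t. \<forall>a. a * v ^ t div p = D \<longrightarrow> (\<forall>i<t. (v ^ Suc i * a mod p) mod v = w i)"
  using assms(4)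
proof (induction t arbitrary: w)
  case 0
  show ?case by simp
next
  case (Suc t)
  obtain D' where "D' < v ^ t"
    and pattern': "\<And>b. b * v ^ t div p = D' \<Longrightarrow> \<forall>i<t. (v ^ Suc i * b mod p) mod v = w (Suc i)"
    using Suc.IH[of "\<lambda>i. w (Suc i)"] Suc.prems by auto
  obtain d where "d < v" and d: "[w 0 + p * d = 0] (mod v)"
    using coprime_exists_add_mult_cong_0[OF assms(1,3)] by blast
  define D where "D = d * v ^ t + D'"
  have "D < v ^ Suc t"
  proof -
    have "D < (d + 1) * v ^ t" using \<open>D' < v ^ t\<close> by (simp add: D_def)
    also have "\<dots> \<le> v * v ^ t" using \<open>d < v\<close> by (intro mult_right_mono) auto
    finally show ?thesis by simp
  qed
  moreover have "\<forall>i<Suc t. (v ^ Suc i * a mod p) mod v = w i" if a: "a * v ^ Suc t div p = D" for a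
  proof -
    \<comment> \<open>b/p is a/p with its leading base-v digit v * a div p removed\<close>
    define b where "b = v * a mod p"
    have "b < p" using assms(2) by (simp add: b_def)
    have va: "v * a = p * (v * a div p) + b" by (simp add: b_def)
    have "a * v ^ Suc t = (v * a) * v ^ t" by (simp add: mult_ac)
    also have "\<dots> = p * (v * a div p * v ^ t) + b * v ^ t"
      by (subst va) (simp add: algebra_simps)
    finally have "D = v * a div p * v ^ t + b * v ^ t div p"
      using a assms(2) by simp
    moreover have "b * v ^ t div p < v ^ t"
      using \<open>b < p\<close> assms(3) by (simp add: less_mult_imp_div_less)
    ultimately have "v * a div p = D div v ^ t" "b * v ^ t div p = D mod v ^ t"
      using assms(3) by simp_all
    then have "v * a div p = d" and "b * v ^ t div p = D'"
      using \<open>D' < v ^ t\<close> assms(3) by (simp_all add: D_def)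
    show ?thesis
    proof (intro allI impI)
      fix i assume "i < Suc t"
      show "(v ^ Suc i * a mod p) mod v = w i"
      proof (cases i)
        case 0
        have "b + p * d = v * a" using va \<open>v * a div p = d\<close> by simp
        then have "[b + p * d = w 0 + p * d] (mod v)"
          using d by (simp add: cong_def)
        then have "[b = w 0] (mod v)" by (simp add: cong_add_rcancel_nat)
        then show ?thesis
          using 0 Suc.prems by (simp add: cong_def b_def)
      next
        case (Suc j)
        have "v ^ Suc j * b mod p = v ^ Suc j * (v * a) mod p"
          unfolding b_def by (rule mod_mult_right_eq)
        then have "v ^ Suc i * a mod p = v ^ Suc j * b mod p"
          by (simp add: Suc mult_ac)
        then show ?thesis
          using pattern'[OF \<open>b * v ^ t div p = D'\<close>] Suc \<open>i < Suc t\<close> by simp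
      qed
    qed
  qed
  ultimately show ?case by blast
qed

lemma residue_patterns_realized_if_power_less:
  fixes p v s :: nat and z :: "nat \<Rightarrow> nat"
  assumes "coprime p v" "1 < v" "v ^ Suc s < p" "\<forall>i<Suc s. z i < v"
  shows "\<exists>a\<in>{0<..<p}. \<forall>i<Suc s. (v ^ i * a mod p) mod v = z i"
proof -
  have "0 < p" "0 < v ^ s" using assms(2,3) by simp_all
  obtain D where "D < v ^ s"
    and pattern: "\<And>a. a * v ^ s div p = D \<Longrightarrow> \<forall>i<s. (v ^ Suc i * a mod p) mod v = z (Suc i)"
    using leading_digits_prescribe_residue_pattern[OF assms(1) \<open>0 < p\<close>, of s "\<lambda>i. z (Suc i)"] assms(2,4)
    by auto
  define c where "c = p * D div v ^ s + 1"
  obtain a where "c \<le> a" "a < c + v" "a mod v = z 0"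
    using exists_mod_eq_in_window[of "z 0" v c] assms(4) by auto
  have "p * D < c * v ^ s"
    using \<open>0 < v ^ s\<close> by (simp add: c_def dividend_less_div_times)
  also have "\<dots> \<le> a * v ^ s" using \<open>c \<le> a\<close> by simp
  finally have lower: "p * D < a * v ^ s" .
  have "a * v ^ s \<le> (p * D div v ^ s + v) * v ^ s"
    using \<open>a < c + v\<close> by (intro mult_right_mono) (simp_all add: c_def)
  also have "\<dots> \<le> p * D + v ^ Suc s"
    by (simp add: algebra_simps)
  also have "\<dots> < p * Suc D" using assms(3) by simp
  finally have upper: "a * v ^ s < p * Suc D" .
  have "a * v ^ s div p = D" using lower upper by (intro div_nat_eqI) simp_all
  have "a * v ^ s < p * v ^ s"
    using upper \<open>D < v ^ s\<close> by (meson Suc_leI less_le_trans mult_le_mono2)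
  then have "a \<in> {0<..<p}" using \<open>c \<le> a\<close> by (simp add: c_def)
  moreover have "(v ^ i * a mod p) mod v = z i" if "i < Suc s" for i
  proof (cases i)
    case 0
    then show ?thesis using \<open>a \<in> {0<..<p}\<close> \<open>a mod v = z 0\<close> by simp
  next
    case (Suc j)
    then show ?thesis using pattern[OF \<open>a * v ^ s div p = D\<close>] that by simp
  qed
  ultimately show ?thesis by blast
qed

lemma power_le_card_if_all_patterns_realized:
  fixes f :: "nat \<Rightarrow> 'a \<Rightarrow> nat"
  assumes "finite A" "\<forall>z. (\<forall>i<t. z i < v) \<longrightarrow> (\<exists>a\<in>A. \<forall>i<t. f i a = z i)"
  shows "v ^ t \<le> card A"
proof -
  have "(\<Pi>\<^sub>E i\<in>{..<t}. {..<v}) \<subseteq> (\<lambda>a. \<lambda>i\<in>{..<t}. f i a) ` A"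
  proof
    fix z assume z: "z \<in> (\<Pi>\<^sub>E i\<in>{..<t}. {..<v})"
    then obtain a where "a \<in> A" and a: "\<forall>i<t. f i a = z i" using assms(2) by auto
    have "z = (\<lambda>i\<in>{..<t}. f i a)"
    proof
      fix i show "z i = (\<lambda>i\<in>{..<t}. f i a) i"
        using z a PiE_arb[OF z, of i] by (cases "i < t") simp_all
    qed
    then show "z \<in> (\<lambda>a. \<lambda>i\<in>{..<t}. f i a) ` A"
      using \<open>a \<in> A\<close> by blast
  qed
  then have "card (\<Pi>\<^sub>E i\<in>{..<t}. {..<v}) \<le> card A"
    using assms(1) by (meson card_image_le card_mono finite_imageI le_trans)
  then show ?thesis by (simp add: card_PiE)
qed

lemma pattern_count_pos_iff:
  fixes p v t :: nat and z :: "nat \<Rightarrow> nat"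
  assumes "prime p" "residue_primroot p v"
  shows "0 < pattern_count v p t z \<longleftrightarrow> (\<exists>a\<in>{0<..<p}. \<forall>i<t. (v ^ i * a mod p) mod v = z i)"
proof -
  have "1 < p" using assms(1) prime_gt_1_nat by blast
  then have powers: "(\<lambda>x. v ^ x mod p) ` {..<p - 1} = {0<..<p}"
    using residue_primroot_is_generator[OF _ assms(2)] assms(1)
    by (simp add: totient_prime totatives_prime bij_betw_def)
  have "v ^ (x + i) mod p = v ^ i * (v ^ x mod p) mod p" for x i
    by (simp add: power_add mod_mult_right_eq mult.commute)
  then have "{x \<in> {0..p - 2}. \<forall>i<t. (v ^ (x + i) mod p) mod v = z i}
      = {x \<in> {..<p - 1}. \<forall>i<t. (v ^ i * (v ^ x mod p) mod p) mod v = z i}"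
    using \<open>1 < p\<close> by auto
  then show ?thesis
    unfolding pattern_count_def by (auto simp: card_gt_0_iff simp flip: powers)
qed

theorem corollary7:
  fixes p v t :: nat
  assumes "prime p" and "odd p"
    and "1 < v" and "v < p - 1"
    and "residue_primroot p v"
    and "t \<ge> 1"
  shows "(\<forall>z :: nat \<Rightarrow> nat. (\<forall>i<t. z i < v) \<longrightarrow> pattern_count v p t z > 0)
         \<longleftrightarrow> p \<ge> v ^ t + 1"
proof
  assume "\<forall>z :: nat \<Rightarrow> nat. (\<forall>i<t. z i < v) \<longrightarrow> pattern_count v p t z > 0"
  then have "v ^ t \<le> card {0<..<p}"
    using power_le_card_if_all_patterns_realized[of "{0<..<p}"]
      pattern_count_pos_iff[OF assms(1,5)] by auto
  then show "p \<ge> v ^ t + 1" using prime_gt_1_nat[OF assms(1)] by simp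
next
  assume "p \<ge> v ^ t + 1"
  obtain s where "t = Suc s" using assms(6) by (cases t) auto
  have "coprime p v" using assms(5) by (simp add: residue_primroot_def)
  show "\<forall>z :: nat \<Rightarrow> nat. (\<forall>i<t. z i < v) \<longrightarrow> pattern_count v p t z > 0"
    using residue_patterns_realized_if_power_less[OF \<open>coprime p v\<close> assms(3)]
      \<open>p \<ge> v ^ t + 1\<close> pattern_count_pos_iff[OF assms(1,5)] \<open>t = Suc s\<close> by auto
qed

end
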